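(* Let $n$ be a positive integer with $n\equiv 4\pmod 6$ and let $t=\lfloor n/3\rfloor$. Then the collection of subgroups of $S_n$ consisting of: all stabilizers of partitions of $\{1,\dots,n\}$ into two blocks of size $n/2$; $A_n$; and, for every $i$ with $1\le i\le t$ and $i\neq t-1$, all setwise stabilizers of $i$-element subsets of $\{1,\dots,n\}$, is a cover of $S_n$. In other words, the subgroups $S_{t-1}\times S_{n-t+1}$ can be removed from the cover consisting of all subgroups $S_{n/2}\wr S_2$, $A_n$, and $S_i\times S_{n-i}$ ($1\le i\le t$) while still covering $S_n$.
   Context: $S_n$ is the symmetric group on $\{1,\dots,n\}$. The stabilizer of a partition $\{B_1,B_2\}$ is the set of $g$ with $\{B_1^g,B_2^g\}=\{B_1,B_2\}$ (isomorphic to $S_{n/2}\wr S_2$); the setwise stabilizer of an $i$-subset is isomorphic to $S_i\times S_{n-i}$. A cover of a group is a collection of proper subgroups whose union is the group. *)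

theory Defs
  imports "HOL-Algebra.Sym_Groups"
begin

definition is_cover :: "('a, 'b) monoid_scheme \<Rightarrow> 'a set set \<Rightarrow> bool" where
  "is_cover G \<C> \<longleftrightarrow>
     (\<forall>H\<in>\<C>. subgroup H G \<and> H \<noteq> carrier G) \<and> \<Union>\<C> = carrier G"

definition partition_stabilizer :: "nat \<Rightarrow> nat set \<Rightarrow> nat set \<Rightarrow> (nat \<Rightarrow> nat) set" where
  "partition_stabilizer n B1 B2 =
     {g \<in> carrier (sym_group n). {g ` B1, g ` B2} = {B1, B2}}"

definition set_stabilizer :: "nat \<Rightarrow> nat set \<Rightarrow> (nat \<Rightarrow> nat) set" where
  "set_stabilizer n A = {g \<in> carrier (sym_group n). g ` A = A}"

end

theory Submission
  imports Defs
begin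

text \<open>
  An even permutation lies in \<open>A\<^sub>n\<close>. If an odd permutation \<open>g\<close> has only cycles of even length,
  the points at even distance along each cycle form a set \<open>B\<close> with \<open>g B\<close> the complement of \<open>B\<close>,
  so \<open>g\<close> stabilizes a partition into two halves. Otherwise \<open>g\<close> has a cycle of odd length \<open>l\<close>;
  its complement has even size and is not a single cycle, since two odd cycles make an even
  permutation. So \<open>{1..n}\<close> splits into three nonempty \<open>g\<close>-invariant sets of sizes \<open>l, a, b\<close>
  with \<open>l\<close> odd, and for \<open>n = 6k + 4\<close>, \<open>t = 2k + 1\<close> a short count shows that one of these sets or
  its complement has a size in \<open>{1..t} - {t - 1}\<close>, or size \<open>n / 2\<close>.
\<close>

lemma self_in_set_support: "permutation g \<Longrightarrow> x \<in> set (support g x)"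
  unfolding support_set by (rule range_eqI[of _ _ 0]) simp

lemma card_set_support: "permutation g \<Longrightarrow> card (set (support g x)) = least_power g x"
  using distinct_card[OF cycle_of_permutation[of g x]] by simp

lemma set_support_subset:
  assumes "permutation g" "g ` T = T" "x \<in> T"
  shows "set (support g x) \<subseteq> T"
proof -
  have "(g ^^ i) x \<in> T" for i
    using assms(2,3) by (induction i) auto
  then show ?thesis unfolding support_set[OF assms(1)] by blast
qed

lemma image_set_support:
  assumes "permutation g"
  shows "g ` set (support g x) = set (support g x)"
proof (rule endo_inj_surj)
  show "g ` set (support g x) \<subseteq> set (support g x)"
    unfolding support_set[OF assms]
  proof clarify
    fix i show "g ((g ^^ i) x) \<in> range (\<lambda>i. (g ^^ i) x)"
      by (rule range_eqI[of _ _ "Suc i"]) simp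
  qed
  have "inj g" using assms by (simp add: bij_is_inj permutation_bijective)
  then show "inj_on g (set (support g x))" by (rule inj_on_subset) simp
qed simp

lemma funpow_eq_imp_even_iff:
  assumes g: "permutation g" and L: "even (least_power g x)" and eq: "(g ^^ m) x = (g ^^ m') x"
  shows "even m \<longleftrightarrow> even m'"
proof -
  have "even i \<longleftrightarrow> even j" if "i \<le> j" "(g ^^ i) x = (g ^^ j) x" for i j
  proof -
    have "(g ^^ (j - i)) x = x"
      using g that by (simp add: funpow_diff bij_is_inj permutation_bijective)
    then have "least_power g x dvd j - i" by (rule least_power_minimal)
    with L have "even (j - i)" by (rule dvd_trans)
    with that(1) show ?thesis by presburger
  qed
  note parity = this
  show ?thesis
  proof (cases "m \<le> m'")
    case True
    from True eq show ?thesis by (rule parity)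
  next
    case False
    with eq[symmetric] show ?thesis using parity[of m' m] by simp
  qed
qed

lemma image_even_powers:
  assumes g: "permutation g" and L: "even (least_power g x)"
  defines "E \<equiv> range (\<lambda>j. (g ^^ (2 * j)) x)"
  shows "g ` E = set (support g x) - E"
proof (intro equalityI subsetI)
  fix z assume "z \<in> g ` E"
  then obtain j where z: "z = (g ^^ Suc (2 * j)) x" unfolding E_def by auto
  have "z \<notin> E"
  proof
    assume "z \<in> E"
    then obtain i where "z = (g ^^ (2 * i)) x" unfolding E_def by blast
    with z funpow_eq_imp_even_iff[OF g L, of "Suc (2 * j)" "2 * i"] show False by simp
  qed
  moreover have "z \<in> range (\<lambda>i. (g ^^ i) x)" unfolding z by (rule rangeI)
  ultimately show "z \<in> set (support g x) - E" unfolding support_set[OF g] by simp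
next
  fix z assume z: "z \<in> set (support g x) - E"
  then obtain m where m: "z = (g ^^ m) x" unfolding support_set[OF g] by auto
  with z have "odd m" unfolding E_def by auto
  then obtain j where "m = Suc (2 * j)" by (metis oddE Suc_eq_plus1)
  with m show "z \<in> g ` E" unfolding E_def by auto
qed

lemma ex_swapped_complement_if_even_orbits:
  assumes g: "permutation g" and "finite T" "g ` T = T" "\<forall>x\<in>T. even (least_power g x)"
  shows "\<exists>B\<subseteq>T. g ` B = T - B"
  using assms(2-4)
proof (induction T rule: finite_psubset_induct)
  case (psubset T)
  show ?case
  proof (cases "T = {}")
    case False
    then obtain x where x: "x \<in> T" by blast
    define Ox where "Ox = set (support g x)"
    define E where "E = range (\<lambda>j. (g ^^ (2 * j)) x)"
    have inj: "inj g" using g by (simp add: bij_is_inj permutation_bijective)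
    have OT: "Ox \<subseteq> T" unfolding Ox_def using g psubset.prems(1) x by (rule set_support_subset)
    have "x \<in> Ox" unfolding Ox_def using g by (rule self_in_set_support)
    then have "T - Ox \<subset> T" using x by blast
    moreover have "g ` (T - Ox) = T - Ox"
      using inj psubset.prems(1) image_set_support[OF g] by (simp add: image_set_diff Ox_def)
    ultimately obtain B where B: "B \<subseteq> T - Ox" "g ` B = T - Ox - B"
      using psubset.IH psubset.prems(2) by (meson Diff_iff)
    have EO: "E \<subseteq> Ox" unfolding E_def Ox_def support_set[OF g] by auto
    have "g ` E = Ox - E"
      unfolding E_def Ox_def using g by (rule image_even_powers) (use psubset.prems(2) x in blast)
    with B(2) have "g ` (E \<union> B) = T - (E \<union> B)" using B(1) EO OT by (auto simp: image_Un)
    moreover have "E \<union> B \<subseteq> T" using B(1) EO OT by blast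
    ultimately show ?thesis by blast
  qed simp
qed

lemma evenperm_cycle_of_list:
  assumes "distinct cs" "cs \<noteq> []"
  shows "evenperm (cycle_of_list cs) \<longleftrightarrow> odd (length cs)"
proof -
  have "swapidseq (length cs - 1) (cycle_of_list cs)"
    by (rule swapidseq_ext_imp_swapidseq[OF swapidseq_ext_of_cycles[OF assms(1)]])
  moreover have "even (length cs - 1) \<longleftrightarrow> odd (length cs)" using assms(2) by (cases cs) auto
  ultimately show ?thesis by (rule evenperm_unique)
qed

lemma evenperm_cycle_of_support:
  "permutation g \<Longrightarrow> evenperm (cycle_of_list (support g x)) \<longleftrightarrow> odd (least_power g x)"
  using evenperm_cycle_of_list[OF cycle_of_permutation[of g x]] least_power_of_permutation(2)[of g x]
  by simp

lemma permutes_two_orbits_eq_comp_cycles: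
  assumes g: "g permutes set (support g x) \<union> set (support g y)" and y: "y \<notin> set (support g x)"
  shows "g = cycle_of_list (support g x) \<circ> cycle_of_list (support g y)"
proof
  fix z
  have perm: "permutation g" using g by (metis List.finite_set finite_Un permutation_permutes)
  have disj: "set (support g y) \<inter> set (support g x) = {}"
    using y disjoint_support'[OF perm] by blast
  consider "z \<in> set (support g y)" | "z \<in> set (support g x)" | "z \<notin> set (support g x) \<union> set (support g y)"
    by blast
  then show "g z = (cycle_of_list (support g x) \<circ> cycle_of_list (support g y)) z"
  proof cases
    case 1
    then have "g z \<notin> set (support g x)" using image_set_support[OF perm] disj by blast
    then have "cycle_of_list (support g x) (g z) = g z" by (rule id_outside_supp)
    with cycle_restrict[OF perm 1] show ?thesis by simp
  next
    case 2
    with disj have "cycle_of_list (support g y) z = z" by (blast intro: id_outside_supp)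
    with cycle_restrict[OF perm 2] show ?thesis by simp
  next
    case 3
    with g show ?thesis by (simp add: permutes_not_in id_outside_supp)
  qed
qed

lemma evenperm_if_permutes_two_odd_orbits:
  assumes "g permutes set (support g x) \<union> set (support g y)" "y \<notin> set (support g x)"
    "odd (least_power g x)" "odd (least_power g y)"
  shows "evenperm g"
proof -
  have "permutation g" using assms(1) by (metis List.finite_set finite_Un permutation_permutes)
  then have "evenperm (cycle_of_list (support g x) \<circ> cycle_of_list (support g y))"
    using assms(3,4) by (simp add: evenperm_comp permutation_of_cycle evenperm_cycle_of_support)
  with permutes_two_orbits_eq_comp_cycles[OF assms(1,2)] show ?thesis by metis
qed

text \<open>A \<open>g\<close>-invariant set whose size is \<open>covered_size n t\<close> puts \<open>g\<close> into a member of the cover.\<close>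

definition small_size :: "nat \<Rightarrow> nat \<Rightarrow> bool" where
  "small_size t c \<longleftrightarrow> 1 \<le> c \<and> c \<le> t \<and> c \<noteq> t - 1"

definition covered_size :: "nat \<Rightarrow> nat \<Rightarrow> nat \<Rightarrow> bool" where
  "covered_size n t c \<longleftrightarrow> small_size t c \<or> small_size t (n - c) \<or> 2 * c = n"

lemma not_covered_sizeD:
  assumes "\<not> covered_size (6 * k + 4) (2 * k + 1) c" "1 \<le> c" "c < 6 * k + 4"
  shows "c = 2 * k \<or> (2 * k + 2 \<le> c \<and> c \<le> 4 * k + 2) \<or> c = 4 * k + 4"
  using assms unfolding covered_size_def small_size_def by linarith

lemma covered_size_of_three_parts:
  fixes n l a b :: nat
  assumes "n mod 6 = 4" "l + a + b = n" "odd l" "1 \<le> a" "1 \<le> b"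
  shows "covered_size n (n div 3) l \<or> covered_size n (n div 3) a \<or> covered_size n (n div 3) b"
proof (rule ccontr)
  obtain k where n: "n = 6 * k + 4" using assms(1) by (metis mod_div_mult_eq add.commute mult.commute)
  then have t: "n div 3 = 2 * k + 1" by simp
  assume "\<not> ?thesis"
  then have "\<not> covered_size (6 * k + 4) (2 * k + 1) c" if "c \<in> {l, a, b}" for c
    using that unfolding t unfolding n by blast
  moreover have "1 \<le> c \<and> c < 6 * k + 4" if "c \<in> {l, a, b}" for c
    using that assms(2,4,5) odd_pos[OF assms(3)] n by auto
  ultimately have "c = 2 * k \<or> (2 * k + 2 \<le> c \<and> c \<le> 4 * k + 2) \<or> c = 4 * k + 4" if "c \<in> {l, a, b}" for c
    using that not_covered_sizeD by blast
  note sizes = this[of l, simplified] this[of a, simplified] this[of b, simplified]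
  \<comment> \<open>The odd part is at least \<open>2k + 3\<close>, so the other two parts are both \<open>2k\<close>.\<close>
  have "l \<noteq> 2 * k" "l \<noteq> 2 * k + 2" "l \<noteq> 4 * k + 4" using assms(3) by auto
  with sizes assms(2) n have "l = 2 * k + 4" by (elim disjE) linarith+
  with assms(3) show False by simp
qed

lemma odd_orbit_complement_not_orbit:
  assumes gS: "g permutes S" and S: "finite S" "even (card S)" and odd: "\<not> evenperm g"
    and x: "x \<in> S" "odd (least_power g x)"
  obtains Q where "Q \<subseteq> S - set (support g x)" "g ` Q = Q" "Q \<noteq> {}" "Q \<noteq> S - set (support g x)"
proof -
  define Ox where "Ox = set (support g x)"
  have g: "permutation g" using gS S(1) permutation_permutes by blast
  have OxS: "Ox \<subseteq> S" unfolding Ox_def using g permutes_image[OF gS] x(1) by (rule set_support_subset)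
  have card_Ox: "odd (card Ox)" unfolding Ox_def card_set_support[OF g] using x(2) .
  then have "Ox \<noteq> S" using S(2) by blast
  then obtain y where y: "y \<in> S" "y \<notin> Ox" using OxS by blast
  define Oy where "Oy = set (support g y)"
  have "Oy \<subseteq> S" unfolding Oy_def using g permutes_image[OF gS] y(1) by (rule set_support_subset)
  moreover have "Oy \<inter> Ox = {}"
    unfolding Oy_def Ox_def using disjoint_support'[OF g, of y x] y(2)[unfolded Ox_def] by blast
  ultimately have OyS: "Oy \<subseteq> S - Ox" by blast
  have gOy: "g ` Oy = Oy" unfolding Oy_def using g by (rule image_set_support)
  have "y \<in> Oy" unfolding Oy_def using g by (rule self_in_set_support)
  then have "Oy \<noteq> {}" by blast
  moreover have "Oy \<noteq> S - Ox"
  proof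
    assume Oy: "Oy = S - Ox"
    then have "card Ox + card Oy = card S" using OxS S(1) by (simp add: card_Diff_subset finite_subset card_mono)
    with card_Ox S(2) have odd_y: "odd (least_power g y)"
      unfolding Oy_def card_set_support[OF g] by (metis even_add)
    have "g permutes Ox \<union> Oy" using gS OxS Oy by (simp add: Un_absorb1)
    then have "evenperm g"
      using y(2) x(2) odd_y unfolding Ox_def Oy_def by (rule evenperm_if_permutes_two_odd_orbits)
    with odd show False by contradiction
  qed
  ultimately show ?thesis using that[OF OyS[unfolded Ox_def] gOy] unfolding Ox_def by blast
qed

lemma odd_permutation_covered_or_swaps_half:
  assumes gS: "g permutes S" and S: "finite S" "card S mod 6 = 4" and odd: "\<not> evenperm g"
  shows "(\<exists>A\<subseteq>S. g ` A = A \<and> covered_size (card S) (card S div 3) (card A)) \<or> (\<exists>B\<subseteq>S. g ` B = S - B)"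
proof -
  have g: "permutation g" using gS S(1) permutation_permutes by blast
  have gS': "g ` S = S" using gS by (rule permutes_image)
  have even: "even (card S)" using S(2) by presburger
  consider "\<forall>x\<in>S. even (least_power g x)" | x where "x \<in> S" "odd (least_power g x)" by blast
  then show ?thesis
  proof cases
    case 1
    then show ?thesis using ex_swapped_complement_if_even_orbits[OF g S(1) gS'] by blast
  next
    case 2
    define P where "P = set (support g x)"
    obtain Q where Q: "Q \<subseteq> S - P" "g ` Q = Q" "Q \<noteq> {}" "Q \<noteq> S - P"
      using odd_orbit_complement_not_orbit[OF gS S(1) even odd 2] unfolding P_def by blast
    define R where "R = S - P - Q"
    have PS: "P \<subseteq> S" unfolding P_def using g gS' 2(1) by (rule set_support_subset)
    have gP: "g ` P = P" unfolding P_def using g by (rule image_set_support)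
    have gR: "g ` R = R"
      unfolding R_def using permutes_inj[OF gS] gS' gP Q(2) by (simp add: image_set_diff)
    have "1 \<le> card R"
      using Q(1,4) S(1) unfolding R_def by (simp add: Suc_le_eq card_gt_0_iff)
    have fin: "finite (S - P)" using S(1) by simp
    have "card (S - P) = card S - card P" "card P \<le> card S"
      using PS S(1) by (simp_all add: card_Diff_subset finite_subset card_mono)
    moreover have "card R = card (S - P) - card Q" "card Q \<le> card (S - P)"
      unfolding R_def using Q(1) fin by (simp_all add: card_Diff_subset finite_subset card_mono)
    ultimately have card_S: "card P + card Q + card R = card S" by linarith
    have "odd (card P)" unfolding P_def card_set_support[OF g] using 2(2) .
    moreover have "1 \<le> card Q"
      using Q(1,3) S(1) by (simp add: Suc_le_eq card_gt_0_iff finite_subset)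
    ultimately have "covered_size (card S) (card S div 3) (card P) \<or>
      covered_size (card S) (card S div 3) (card Q) \<or> covered_size (card S) (card S div 3) (card R)"
      using \<open>1 \<le> card R\<close> by (rule covered_size_of_three_parts[OF S(2) card_S])
    moreover have "?thesis" if "A \<subseteq> S" "g ` A = A" "covered_size (card S) (card S div 3) (card A)" for A
      using that by (intro disjI1 exI[of _ A]) simp
    moreover have "Q \<subseteq> S" "R \<subseteq> S" using Q(1) unfolding R_def by auto
    ultimately show ?thesis using PS gP Q(2) gR by metis
  qed
qed

definition set_family_stabilizer :: "nat \<Rightarrow> nat set set \<Rightarrow> (nat \<Rightarrow> nat) set" where
  "set_family_stabilizer n \<F> = {g \<in> carrier (sym_group n). (\<lambda>X. g ` X) ` \<F> = \<F>}"

lemma set_stabilizer_eq_set_family_stabilizer: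
  "set_stabilizer n A = set_family_stabilizer n {A}"
  unfolding set_stabilizer_def set_family_stabilizer_def by simp

lemma partition_stabilizer_eq_set_family_stabilizer:
  "partition_stabilizer n B1 B2 = set_family_stabilizer n {B1, B2}"
  unfolding partition_stabilizer_def set_family_stabilizer_def by simp

lemma subgroup_set_family_stabilizer: "subgroup (set_family_stabilizer n \<F>) (sym_group n)"
proof (rule group.subgroupI[OF sym_group_is_group])
  show "set_family_stabilizer n \<F> \<subseteq> carrier (sym_group n)"
    unfolding set_family_stabilizer_def by blast
  have "id \<in> set_family_stabilizer n \<F>"
    unfolding set_family_stabilizer_def sym_group_carrier by (simp add: permutes_id)
  then show "set_family_stabilizer n \<F> \<noteq> {}" by blast
next
  fix g assume "g \<in> set_family_stabilizer n \<F>"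
  then have g: "g permutes {1..n}" and gF: "(\<lambda>X. g ` X) ` \<F> = \<F>"
    unfolding set_family_stabilizer_def sym_group_carrier by auto
  have "(\<lambda>X. inv' g ` X) ` \<F> = (\<lambda>X. inv' g ` X) ` (\<lambda>X. g ` X) ` \<F>" using gF by simp
  also have "\<dots> = \<F>" using permutes_inj[OF g] by (simp add: image_image image_inv_f_f)
  moreover have "inv\<^bsub>sym_group n\<^esub> g = inv' g" using g by (simp add: sym_group_carrier)
  ultimately show "inv\<^bsub>sym_group n\<^esub> g \<in> set_family_stabilizer n \<F>"
    using permutes_inv[OF g] unfolding set_family_stabilizer_def sym_group_carrier by simp
next
  fix g h assume "g \<in> set_family_stabilizer n \<F>" "h \<in> set_family_stabilizer n \<F>"
  then have g: "g permutes {1..n}" "(\<lambda>X. g ` X) ` \<F> = \<F>"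
    and h: "h permutes {1..n}" "(\<lambda>X. h ` X) ` \<F> = \<F>"
    unfolding set_family_stabilizer_def sym_group_carrier by auto
  have "(\<lambda>X. (g \<circ> h) ` X) ` \<F> = (\<lambda>X. g ` X) ` (\<lambda>X. h ` X) ` \<F>"
    by (simp add: image_image comp_def)
  with g(2) h(2) have "(\<lambda>X. (g \<circ> h) ` X) ` \<F> = \<F>" by simp
  then show "g \<otimes>\<^bsub>sym_group n\<^esub> h \<in> set_family_stabilizer n \<F>"
    using permutes_compose[OF h(1) g(1)]
    unfolding set_family_stabilizer_def sym_group_carrier sym_group_mult by simp
qed

lemma set_stabilizer_ne_carrier:
  assumes "A \<subseteq> {1..n}" "a \<in> A" "b \<in> {1..n} - A"
  shows "set_stabilizer n A \<noteq> carrier (sym_group n)"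
proof -
  have "transpose a b \<in> carrier (sym_group n)"
    using assms unfolding sym_group_carrier by (blast intro: permutes_swap_id)
  moreover have "b \<in> transpose a b ` A" using assms(2) by (rule image_eqI[rotated]) simp
  then have "transpose a b \<notin> set_stabilizer n A" using assms(3) unfolding set_stabilizer_def by auto
  ultimately show ?thesis by blast
qed

lemma partition_stabilizer_ne_carrier:
  assumes "B1 \<union> B2 = {1..n}" "B1 \<inter> B2 = {}" "a \<in> B1" "a' \<in> B1" "a \<noteq> a'" "b \<in> B2"
  shows "partition_stabilizer n B1 B2 \<noteq> carrier (sym_group n)"
proof -
  let ?s = "transpose a b"
  have "?s \<in> carrier (sym_group n)"
    using assms unfolding sym_group_carrier by (blast intro: permutes_swap_id)
  moreover have "b \<in> ?s ` B1" using assms(3) by (rule image_eqI[rotated]) simp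
  moreover have "a' \<noteq> b" using assms(2,4,6) by blast
  with assms(5) have "a' \<in> ?s ` B1" using assms(4) by (intro image_eqI[of a']) auto
  ultimately have "?s ` B1 \<noteq> B1" "?s ` B1 \<noteq> B2" using assms(2,4,6) by blast+
  then have "{?s ` B1, ?s ` B2} \<noteq> {B1, B2}" by (metis insertI1 insert_iff singletonD)
  then have "?s \<notin> partition_stabilizer n B1 B2" unfolding partition_stabilizer_def by simp
  with \<open>?s \<in> carrier (sym_group n)\<close> show ?thesis by blast
qed

definition half_partition_stabilizers :: "nat \<Rightarrow> (nat \<Rightarrow> nat) set set" where
  "half_partition_stabilizers n = {partition_stabilizer n B1 B2 | B1 B2.
     B1 \<union> B2 = {1..n} \<and> B1 \<inter> B2 = {} \<and> card B1 = n div 2 \<and> card B2 = n div 2}"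

definition small_set_stabilizers :: "nat \<Rightarrow> nat \<Rightarrow> (nat \<Rightarrow> nat) set set" where
  "small_set_stabilizers n t = {set_stabilizer n A | A i.
     1 \<le> i \<and> i \<le> t \<and> i \<noteq> t - 1 \<and> A \<subseteq> {1..n} \<and> card A = i}"

lemma proper_subgroup_if_half_partition_stabilizer:
  assumes "H \<in> half_partition_stabilizers n" "4 \<le> n"
  shows "subgroup H (sym_group n) \<and> H \<noteq> carrier (sym_group n)"
proof -
  obtain B1 B2 where H: "H = partition_stabilizer n B1 B2" and B: "B1 \<union> B2 = {1..n}" "B1 \<inter> B2 = {}"
    and card: "card B1 = n div 2" "card B2 = n div 2"
    using assms(1) unfolding half_partition_stabilizers_def by blast
  from card assms(2) have "Suc 1 \<le> card B1" "B2 \<noteq> {}" by auto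
  then obtain a C b where "B1 = insert a C" "a \<notin> C" "1 \<le> card C" "b \<in> B2"
    unfolding card_le_Suc_iff by blast
  moreover from this(3) obtain a' where "a' \<in> C" by fastforce
  ultimately have "partition_stabilizer n B1 B2 \<noteq> carrier (sym_group n)"
    using B by (intro partition_stabilizer_ne_carrier[of B1 B2 n a a' b]) auto
  then show ?thesis
    unfolding H using subgroup_set_family_stabilizer partition_stabilizer_eq_set_family_stabilizer by simp
qed

lemma proper_subgroup_if_small_set_stabilizer:
  assumes "H \<in> small_set_stabilizers n t" "t < n"
  shows "subgroup H (sym_group n) \<and> H \<noteq> carrier (sym_group n)"
proof -
  obtain A where H: "H = set_stabilizer n A" and A: "A \<subseteq> {1..n}" "1 \<le> card A" "card A \<le> t"
    using assms(1) unfolding small_set_stabilizers_def by blast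
  then obtain a where "a \<in> A" by fastforce
  moreover from A assms(2) have "A \<noteq> {1..n}" by auto
  with A(1) obtain b where "b \<in> {1..n} - A" by blast
  ultimately have "set_stabilizer n A \<noteq> carrier (sym_group n)"
    using A(1) by (rule set_stabilizer_ne_carrier[rotated])
  then show ?thesis
    unfolding H using subgroup_set_family_stabilizer set_stabilizer_eq_set_family_stabilizer by simp
qed

lemma proper_subgroup_alt_group:
  assumes "2 \<le> n"
  shows "subgroup (carrier (alt_group n)) (sym_group n) \<and> carrier (alt_group n) \<noteq> carrier (sym_group n)"
proof -
  have "transpose 1 2 \<in> carrier (sym_group n) - carrier (alt_group n)"
    using assms by (simp add: sym_group_carrier alt_group_carrier permutes_swap_id evenperm_swap)
  then show ?thesis using alt_group_is_subgroup by blast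
qed

lemma mem_half_partition_stabilizers:
  assumes "g permutes {1..n}" "B \<subseteq> {1..n}" "2 * card B = n"
    "{g ` B, g ` ({1..n} - B)} = {B, {1..n} - B}"
  shows "g \<in> \<Union> (half_partition_stabilizers n)"
proof -
  have "card ({1..n} - B) = n div 2" using assms(2,3) by (simp add: card_Diff_subset finite_subset)
  with assms have "partition_stabilizer n B ({1..n} - B) \<in> half_partition_stabilizers n"
    unfolding half_partition_stabilizers_def by force
  moreover have "g \<in> partition_stabilizer n B ({1..n} - B)"
    using assms(1,4) unfolding partition_stabilizer_def sym_group_carrier by simp
  ultimately show ?thesis by blast
qed

lemma mem_small_set_stabilizers:
  assumes "g permutes {1..n}" "A \<subseteq> {1..n}" "g ` A = A" "small_size t (card A)"
  shows "g \<in> \<Union> (small_set_stabilizers n t)"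
proof -
  have "set_stabilizer n A \<in> small_set_stabilizers n t"
    using assms(2,4) unfolding small_set_stabilizers_def small_size_def by blast
  moreover have "g \<in> set_stabilizer n A"
    using assms(1,3) unfolding set_stabilizer_def sym_group_carrier by simp
  ultimately show ?thesis by blast
qed

lemma mem_cover_if_invariant_covered_size:
  assumes g: "g permutes {1..n}" and A: "A \<subseteq> {1..n}" "g ` A = A" "covered_size n t (card A)"
  shows "g \<in> \<Union> (half_partition_stabilizers n) \<union> \<Union> (small_set_stabilizers n t)"
proof -
  let ?S = "{1..n}"
  have gA': "g ` (?S - A) = ?S - A"
    using A(2) permutes_inj[OF g] permutes_image[OF g] by (simp add: image_set_diff)
  have "card (?S - A) = n - card A" using A(1) by (simp add: card_Diff_subset finite_subset)
  with A(3) consider "small_size t (card A)" | "small_size t (card (?S - A))" | "2 * card A = n"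
    unfolding covered_size_def by auto
  then show ?thesis
  proof cases
    case 1
    then show ?thesis using mem_small_set_stabilizers[OF g A(1,2)] by blast
  next
    case 2
    then show ?thesis using mem_small_set_stabilizers[OF g Diff_subset gA'] by blast
  next
    case 3
    then show ?thesis using mem_half_partition_stabilizers[OF g A(1)] A(2) gA' by simp
  qed
qed

lemma mem_half_partition_stabilizers_if_swaps_complement:
  assumes g: "g permutes {1..n}" and B: "B \<subseteq> {1..n}" "g ` B = {1..n} - B"
  shows "g \<in> \<Union> (half_partition_stabilizers n)"
proof -
  have "card (g ` B) = card B" using permutes_inj[OF g] by (simp add: card_image inj_on_subset)
  then have "2 * card B = n" using B by (simp add: card_Diff_subset finite_subset)
  moreover have "g ` ({1..n} - B) = B"
    using B permutes_inj[OF g] permutes_image[OF g] by (auto simp: image_set_diff)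
  ultimately show ?thesis
    using B mem_half_partition_stabilizers[OF g] by (simp add: insert_commute)
qed

lemma odd_permutation_in_cover:
  assumes "n mod 6 = 4" "g permutes {1..n}" "\<not> evenperm g"
  shows "g \<in> \<Union> (half_partition_stabilizers n) \<union> \<Union> (small_set_stabilizers n (n div 3))"
proof -
  have "finite {1..n}" "card {1..n} mod 6 = 4" using assms(1) by simp_all
  from odd_permutation_covered_or_swaps_half[OF assms(2) this assms(3)]
  consider A where "A \<subseteq> {1..n}" "g ` A = A" "covered_size n (n div 3) (card A)"
    | B where "B \<subseteq> {1..n}" "g ` B = {1..n} - B" by auto
  then show ?thesis
    using mem_cover_if_invariant_covered_size[OF assms(2)]
      mem_half_partition_stabilizers_if_swaps_complement[OF assms(2)]
    by cases blast+
qed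

theorem lemma5p2:
  fixes n t :: nat
  assumes "n > 0" and "n mod 6 = 4" and "t = n div 3"
  shows "is_cover (sym_group n)
     ({partition_stabilizer n B1 B2 | B1 B2.
          B1 \<union> B2 = {1..n} \<and> B1 \<inter> B2 = {} \<and> card B1 = n div 2 \<and> card B2 = n div 2}
      \<union> {carrier (alt_group n)}
      \<union> {set_stabilizer n A | A i.
          1 \<le> i \<and> i \<le> t \<and> i \<noteq> t - 1 \<and> A \<subseteq> {1..n} \<and> card A = i})"
proof -
  let ?\<C> = "half_partition_stabilizers n \<union> {carrier (alt_group n)} \<union> small_set_stabilizers n t"
  have "4 \<le> n" "t < n" using assms by presburger+
  then have proper: "\<forall>H\<in>?\<C>. subgroup H (sym_group n) \<and> H \<noteq> carrier (sym_group n)"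
    using proper_subgroup_if_half_partition_stabilizer[of _ n] proper_subgroup_alt_group[of n]
      proper_subgroup_if_small_set_stabilizer[of _ n t] by auto
  have "carrier (sym_group n) \<subseteq> \<Union> ?\<C>"
  proof
    fix g assume "g \<in> carrier (sym_group n)"
    then have "g permutes {1..n}" by (simp add: sym_group_carrier)
    then show "g \<in> \<Union> ?\<C>"
      using odd_permutation_in_cover[OF assms(2)] assms(3) by (cases "evenperm g") (auto simp: alt_group_carrier)
  qed
  moreover have "\<Union> ?\<C> \<subseteq> carrier (sym_group n)" using proper by (auto dest: subgroup.subset)
  ultimately have "is_cover (sym_group n) ?\<C>" unfolding is_cover_def using proper by blast
  then show ?thesis unfolding half_partition_stabilizers_def small_set_stabilizers_def .
qed

end
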